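(* Let $n\ge 1$ and $a\ge 2$ be integers and $r>0$. For $j\in\mathbb Z$ let $P_j=\bigl(r\cos(2\pi j/n),\, r\sin(2\pi j/n)\bigr)$. Let $E$ be the set of unordered pairs $\{s,t\}$ of distinct elements of $\mathbb Z_n$ such that $t\equiv as \pmod n$ or $s\equiv at \pmod n$ (the set of distinct non-degenerate line segments of the residue design, each counted once). Then \[\sum_{\{s,t\}\in E} |P_sP_t| \;=\; 2rg_1\cot\left(\frac{\pi g_1}{2n}\right)-rg_2\cot\left(\frac{\pi g_2}{2m}\right),\] where $m$ is the largest positive divisor of $n$ for which $a^2\equiv 1 \pmod m$, $g_1=\gcd(a-1,n)$ and $g_2=\gcd(a-1,m)$. *)

theory Defs
  imports "HOL-Analysis.Analysis" "HOL-Number_Theory.Cong"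
begin

definition circ_pt :: "real \<Rightarrow> nat \<Rightarrow> int \<Rightarrow> real \<times> real" where
  "circ_pt r n j = (r * cos (2 * pi * of_int j / of_nat n), r * sin (2 * pi * of_int j / of_nat n))"

definition residue_edges :: "nat \<Rightarrow> nat \<Rightarrow> nat set set" where
  "residue_edges n a = {{s, t} | s t. s < n \<and> t < n \<and> s \<noteq> t \<and>
      ([t = a * s] (mod n) \<or> [s = a * t] (mod n))}"

definition seg_len :: "real \<Rightarrow> nat \<Rightarrow> nat set \<Rightarrow> real" where
  "seg_len r n e = dist (circ_pt r n (int (Min e))) (circ_pt r n (int (Max e)))"

definition mdiv :: "nat \<Rightarrow> nat \<Rightarrow> nat" where
  "mdiv n a = (GREATEST m. m dvd n \<and> m > 0 \<and> [a^2 = 1] (mod m))"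

end

theory Submission
  imports Defs
begin

(* Write f s = a s mod n. The edges are the sets {s, f s} with f s ~= s, and such an edge
   arises from two different s exactly when f (f s) = s. Since loops have length zero, the
   edge sum is the sum of |P_s P_(f s)| over all s < n minus half of the same sum over the
   points with f (f s) = s.
   Now |P_s P_(f s)| = 2 r |sin (pi (a - 1) s / n)|, and for g = gcd c N the summand
   |sin (pi c u / N)| depends only on u mod N/g, where multiplication by c/g permutes the
   residues; hence the sum over u < N is g times the classical sum of sin (pi k / M) over
   k < M = N/g, which is cot (pi / (2 M)). This gives the first term. The points with
   f (f s) = s are the multiples of n/m for m = gcd (a^2 - 1) n = mdiv n a, and the same
   formula with N = m gives the second term. *)

lemma sum_image_eq_sum_div_card_fiber:
  fixes g :: "'b \<Rightarrow> 'c::field_char_0"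
  assumes "finite A"
  shows "(\<Sum>y\<in>f ` A. g y) = (\<Sum>x\<in>A. g (f x) / of_nat (card {x'\<in>A. f x' = f x}))"
proof -
  have "g y = (\<Sum>x\<in>{x\<in>A. f x = y}. g y / of_nat (card {x'\<in>A. f x' = y}))" if "y \<in> f ` A" for y
  proof -
    have "{x\<in>A. f x = y} \<noteq> {}"
      using that by blast
    then have "card {x\<in>A. f x = y} \<noteq> 0"
      using assms by simp
    then show ?thesis
      by simp
  qed
  then have "(\<Sum>y\<in>f ` A. g y) = (\<Sum>y\<in>f ` A. \<Sum>x\<in>{x\<in>A. f x = y}. g y / of_nat (card {x'\<in>A. f x' = y}))"
    by (rule sum.cong[OF refl])
  also have "\<dots> = (\<Sum>y\<in>f ` A. \<Sum>x\<in>{x\<in>A. f x = y}. g (f x) / of_nat (card {x'\<in>A. f x' = f x}))"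
    by (intro sum.cong refl) auto
  also have "\<dots> = (\<Sum>x\<in>A. g (f x) / of_nat (card {x'\<in>A. f x' = f x}))"
    using assms by (intro sum.group) auto
  finally show ?thesis .
qed

lemma sum_functional_graph_edges:
  fixes f :: "'a \<Rightarrow> 'a" and h :: "'a set \<Rightarrow> 'b::field_char_0"
  assumes "finite A" "f ` A \<subseteq> A" "\<And>x. h {x} = 0"
  shows "(\<Sum>e\<in>(\<lambda>x. {x, f x}) ` {x\<in>A. f x \<noteq> x}. h e) =
    (\<Sum>x\<in>A. h {x, f x}) - (\<Sum>x\<in>{x\<in>A. f (f x) = x}. h {x, f x}) / 2"
proof -
  define S where "S = {x\<in>A. f x \<noteq> x}"
  have fiber: "{y\<in>S. {y, f y} = {x, f x}} = (if f (f x) = x then {x, f x} else {x})" if "x \<in> S" for x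
    using that assms(2) unfolding S_def by (auto simp: doubleton_eq_iff)
  have "(\<Sum>e\<in>(\<lambda>x. {x, f x}) ` S. h e) = (\<Sum>x\<in>S. h {x, f x} / of_nat (card {y\<in>S. {y, f y} = {x, f x}}))"
    using assms(1) by (intro sum_image_eq_sum_div_card_fiber) (simp add: S_def)
  also have "\<dots> = (\<Sum>x\<in>S. h {x, f x} - (if f (f x) = x then h {x, f x} / 2 else 0))"
  proof (intro sum.cong refl)
    fix x assume "x \<in> S"
    then have "f x \<noteq> x"
      by (simp add: S_def)
    then show "h {x, f x} / of_nat (card {y\<in>S. {y, f y} = {x, f x}}) =
        h {x, f x} - (if f (f x) = x then h {x, f x} / 2 else 0)"
      by (simp add: fiber[OF \<open>x \<in> S\<close>])
  qed
  also have "\<dots> = (\<Sum>x\<in>A. h {x, f x} - (if f (f x) = x then h {x, f x} / 2 else 0))"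
    using assms by (intro sum.mono_neutral_left) (auto simp: S_def)
  also have "\<dots> = (\<Sum>x\<in>A. h {x, f x}) - (\<Sum>x\<in>A. if f (f x) = x then h {x, f x} / 2 else 0)"
    by (rule sum_subtractf)
  also have "(\<Sum>x\<in>A. if f (f x) = x then h {x, f x} / 2 else 0) = (\<Sum>x\<in>{x\<in>A. f (f x) = x}. h {x, f x}) / 2"
    using assms(1) by (auto simp: sum.inter_filter sum_divide_distrib intro!: sum.cong)
  finally show ?thesis
    by (simp add: S_def)
qed

lemma residue_edges_eq_image:
  assumes "n > 0"
  shows "residue_edges n a = (\<lambda>s. {s, a * s mod n}) ` {s\<in>{..<n}. a * s mod n \<noteq> s}"
proof
  show "residue_edges n a \<subseteq> (\<lambda>s. {s, a * s mod n}) ` {s\<in>{..<n}. a * s mod n \<noteq> s}"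
  proof
    fix e assume "e \<in> residue_edges n a"
    then obtain s t where st: "e = {s, t}" "s < n" "t < n" "s \<noteq> t"
        and "[t = a * s] (mod n) \<or> [s = a * t] (mod n)"
      unfolding residue_edges_def by blast
    then consider "t = a * s mod n" | "s = a * t mod n"
      by (auto simp: cong_def)
    then show "e \<in> (\<lambda>s. {s, a * s mod n}) ` {s\<in>{..<n}. a * s mod n \<noteq> s}"
      by cases (use st in \<open>auto simp: insert_commute\<close>)
  qed
next
  show "(\<lambda>s. {s, a * s mod n}) ` {s\<in>{..<n}. a * s mod n \<noteq> s} \<subseteq> residue_edges n a"
    using assms unfolding residue_edges_def by (force simp: cong_def)
qed

lemma abs_sin_add_int_mult_pi: "\<bar>sin (x + pi * of_int k)\<bar> = \<bar>sin x\<bar>"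
  by (simp add: sin_add)

lemma sin_half_mult_sum_sin:
  fixes x :: real
  shows "2 * sin (x / 2) * (\<Sum>k<N. sin (real k * x)) = cos (x / 2) - cos ((real N - 1/2) * x)"
proof (induction N)
  case 0
  then show ?case by simp
next
  case (Suc N)
  have "2 * sin (x / 2) * sin (real N * x) = cos (x / 2 - real N * x) - cos (x / 2 + real N * x)"
    by (simp only: mult.assoc sin_times_sin) simp
  also have "x / 2 - real N * x = - ((real N - 1/2) * x)"
    by (simp add: algebra_simps)
  also have "x / 2 + real N * x = (real N + 1/2) * x"
    by (simp add: algebra_simps)
  finally have "2 * sin (x / 2) * sin (real N * x) = cos ((real N - 1/2) * x) - cos ((real N + 1/2) * x)"
    by simp
  with Suc show ?case by (simp add: algebra_simps)
qed

lemma sum_sin_pi_div_eq_cot: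
  assumes "M > 0"
  shows "(\<Sum>k<M. sin (pi * real k / real M)) = cot (pi / (2 * real M))"
proof -
  define x where "x = pi / real M"
  have "sin (x / 2) > 0"
    unfolding x_def using assms by (intro sin_gt_zero) (auto simp: field_simps)
  moreover have "(real M - 1/2) * x = pi - x / 2"
    unfolding x_def using assms by (simp add: field_simps)
  then have "2 * sin (x / 2) * (\<Sum>k<M. sin (real k * x)) = 2 * cos (x / 2)"
    using sin_half_mult_sum_sin[of x M] by simp
  ultimately have "(\<Sum>k<M. sin (real k * x)) = cot (x / 2)"
    unfolding cot_def by (simp add: field_simps)
  moreover have "(\<Sum>k<M. sin (pi * real k / real M)) = (\<Sum>k<M. sin (real k * x))"
    unfolding x_def by (simp add: field_simps)
  moreover have "x / 2 = pi / (2 * real M)"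
    unfolding x_def by simp
  ultimately show ?thesis
    by simp
qed

lemma abs_sin_pi_div_mod: "\<bar>sin (pi * real x / real M)\<bar> = \<bar>sin (pi * real (x mod M) / real M)\<bar>"
proof (cases "M = 0")
  case False
  have "real x = real (x mod M) + real M * real (x div M)"
    by (metis of_nat_add of_nat_mult mod_mult_div_eq add.commute)
  then have "pi * real x / real M = pi * real (x mod M) / real M + pi * of_int (int (x div M))"
    using False by (simp add: field_simps)
  then show ?thesis by (simp only: abs_sin_add_int_mult_pi)
qed simp

lemma sum_lessThan_mult_mod:
  fixes F :: "nat \<Rightarrow> 'a::semiring_1"
  shows "(\<Sum>u<g * M. F (u mod M)) = of_nat g * (\<Sum>u<M. F u)"
proof -
  have "(\<Sum>u\<in>{q * M..<q * M + M}. F (u mod M)) = (\<Sum>u<M. F u)" for q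
    using sum.shift_bounds_nat_ivl[of "\<lambda>u. F (u mod M)" 0 "q * M" M]
    by (simp add: atLeast0LessThan add.commute)
  then show ?thesis
    using sum.nat_group[of "\<lambda>u. F (u mod M)" M g] by (simp add: mult.commute)
qed

lemma bij_betw_mult_mod_lessThan:
  fixes b M :: nat
  assumes "coprime b M"
  shows "bij_betw (\<lambda>u. b * u mod M) {..<M} {..<M}"
proof -
  have "inj_on (\<lambda>u. b * u mod M) {..<M}"
  proof (rule inj_onI)
    fix u v assume "u \<in> {..<M}" "v \<in> {..<M}" "b * u mod M = b * v mod M"
    then show "u = v"
      using cong_mult_lcancel_nat[OF assms] by (simp add: cong_def)
  qed
  moreover have "(\<lambda>u. b * u mod M) ` {..<M} \<subseteq> {..<M}"
    by (cases "M = 0") auto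
  ultimately show ?thesis
    by (simp add: bij_betw_def endo_inj_surj)
qed

lemma sum_abs_sin_pi_mult_div:
  fixes c N :: nat
  assumes "N > 0"
  shows "(\<Sum>u<N. \<bar>sin (pi * real c * real u / real N)\<bar>) =
    real (gcd c N) * cot (pi * real (gcd c N) / (2 * real N))"
proof -
  define g where "g = gcd c N"
  define M where "M = N div g"
  define b where "b = c div g"
  define H where "H = (\<lambda>k. \<bar>sin (pi * real k / real M)\<bar>)"
  have "g > 0"
    using assms by (simp add: g_def)
  have N_eq: "N = g * M" and c_eq: "c = g * b"
    by (simp_all add: M_def b_def g_def)
  then have "M > 0"
    using assms by (cases M) auto
  have "coprime b M"
    unfolding b_def M_def g_def using assms by (intro div_gcd_coprime) simp
  have summand: "\<bar>sin (pi * real c * real u / real N)\<bar> = H (b * (u mod M) mod M)" for u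
  proof -
    have "pi * real c * real u / real N = pi * real (b * u) / real M"
      using \<open>g > 0\<close> by (simp add: N_eq c_eq field_simps)
    then have "\<bar>sin (pi * real c * real u / real N)\<bar> = H (b * u mod M)"
      unfolding H_def by (simp only: abs_sin_pi_div_mod[of "b * u" M])
    then show ?thesis
      by (simp add: mod_mult_right_eq)
  qed
  have "(\<Sum>u<N. \<bar>sin (pi * real c * real u / real N)\<bar>) = (\<Sum>u<g * M. H (b * (u mod M) mod M))"
    unfolding summand by (simp add: N_eq)
  also have "\<dots> = real g * (\<Sum>v<M. H (b * v mod M))"
    by (rule sum_lessThan_mult_mod)
  also have "(\<Sum>v<M. H (b * v mod M)) = (\<Sum>k<M. H k)"
    using bij_betw_mult_mod_lessThan[OF \<open>coprime b M\<close>] by (rule sum.reindex_bij_betw)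
  also have "\<dots> = (\<Sum>k<M. sin (pi * real k / real M))"
    unfolding H_def using \<open>M > 0\<close> by (intro sum.cong refl abs_of_nonneg sin_ge_zero) (auto simp: field_simps)
  also have "\<dots> = cot (pi * real g / (2 * real N))"
    using \<open>g > 0\<close> \<open>M > 0\<close> by (simp add: sum_sin_pi_div_eq_cot N_eq)
  finally show ?thesis
    by (simp add: g_def)
qed

lemma dist_circ_pt:
  "dist (circ_pt r n s) (circ_pt r n t) = 2 * \<bar>r\<bar> * \<bar>sin (pi * of_int (t - s) / real n)\<bar>"
proof -
  define A where "A = 2 * pi * of_int s / real n"
  define B where "B = 2 * pi * of_int t / real n"
  define h where "h = pi * of_int (t - s) / real n"
  have "A - B = 2 * - h"
    unfolding A_def B_def h_def by (cases "n = 0") (simp_all add: field_simps)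
  have "(r * cos A - r * cos B)^2 + (r * sin A - r * sin B)^2 =
      r^2 * ((sin A ^ 2 + cos A ^ 2) + (sin B ^ 2 + cos B ^ 2) - 2 * (cos A * cos B + sin A * sin B))"
    by algebra
  also have "\<dots> = r^2 * (2 - 2 * cos (A - B))"
    by (simp only: sin_cos_squared_add cos_diff) simp
  also have "\<dots> = (2 * r * sin h)^2"
    unfolding \<open>A - B = 2 * - h\<close> cos_double_sin by (simp add: power2_eq_square algebra_simps)
  finally have "dist (circ_pt r n s) (circ_pt r n t) = sqrt ((2 * r * sin h)^2)"
    unfolding circ_pt_def dist_Pair_Pair dist_real_def A_def B_def by simp
  then show ?thesis
    by (simp add: h_def abs_mult)
qed

lemma seg_len_doubleton: "seg_len r n {s, t} = dist (circ_pt r n (int s)) (circ_pt r n (int t))"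
  unfolding seg_len_def by (cases "s \<le> t") (auto simp: max_def min_def dist_commute)

lemma seg_len_mult_mod:
  fixes n a s :: nat
  assumes "a \<ge> 1"
  shows "seg_len r n {s, a * s mod n} = 2 * \<bar>r\<bar> * \<bar>sin (pi * real (a - 1) * real s / real n)\<bar>"
proof -
  have "a * s mod n + n * (a * s div n) = s + (a - 1) * s"
    using assms by (cases a) auto
  then have "real (a * s mod n) + real n * real (a * s div n) = real s + real (a - 1) * real s"
    by (metis of_nat_add of_nat_mult)
  then have "real (a * s mod n) - real s = real (a - 1) * real s - real n * real (a * s div n)"
    by linarith
  then have "pi * of_int (int (a * s mod n) - int s) / real n
      = pi * (real (a - 1) * real s - real n * real (a * s div n)) / real n"
    by simp
  also have "\<dots> = pi * real (a - 1) * real s / real n + pi * of_int (- int (a * s div n))"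
    by (cases "n = 0") (simp_all add: field_simps)
  finally have "pi * of_int (int (a * s mod n) - int s) / real n
      = pi * real (a - 1) * real s / real n + pi * of_int (- int (a * s div n))" .
  then show ?thesis
    by (simp only: seg_len_doubleton dist_circ_pt abs_sin_add_int_mult_pi)
qed

lemma mdiv_eq_gcd:
  assumes "n \<ge> 1" "a \<ge> 1"
  shows "mdiv n a = gcd (a^2 - 1) n"
proof -
  have sq_cong_iff: "[a^2 = 1] (mod m) \<longleftrightarrow> m dvd a^2 - 1" for m
    using assms by (simp add: cong_altdef_nat one_le_power)
  show ?thesis
    unfolding mdiv_def
  proof (rule Greatest_equality)
    show "gcd (a^2 - 1) n dvd n \<and> gcd (a^2 - 1) n > 0 \<and> [a^2 = 1] (mod gcd (a^2 - 1) n)"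
      using assms sq_cong_iff by auto
  next
    fix m assume "m dvd n \<and> m > 0 \<and> [a^2 = 1] (mod m)"
    then have "m dvd gcd (a^2 - 1) n"
      using sq_cong_iff by auto
    then show "m \<le> gcd (a^2 - 1) n"
      using assms by (intro dvd_imp_le) auto
  qed
qed

lemma mult_mod_twice_eq_iff:
  fixes n a s :: nat
  assumes "a \<ge> 1" "s < n"
  shows "a * (a * s mod n) mod n = s \<longleftrightarrow> n div gcd (a^2 - 1) n dvd s"
proof -
  define m where "m = gcd (a^2 - 1) n"
  define d where "d = n div m"
  define c where "c = (a^2 - 1) div m"
  have "m > 0"
    using assms by (simp add: m_def)
  have n_eq: "n = m * d" and c_eq: "a^2 - 1 = m * c"
    by (simp_all add: m_def d_def c_def)
  have "coprime d c"
    unfolding d_def c_def m_def using assms by (subst coprime_commute, intro div_gcd_coprime) simp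
  have "a * (a * s mod n) mod n = a^2 * s mod n"
    by (simp add: mod_mult_right_eq power2_eq_square mult.assoc)
  then have "a * (a * s mod n) mod n = s \<longleftrightarrow> [a^2 * s = s] (mod n)"
    using assms by (simp add: cong_def)
  also have "\<dots> \<longleftrightarrow> n dvd (a^2 - 1) * s"
    using assms by (simp add: cong_altdef_nat one_le_power diff_mult_distrib)
  also have "\<dots> \<longleftrightarrow> d dvd c * s"
    unfolding n_eq c_eq using \<open>m > 0\<close> by (simp add: mult.assoc)
  also have "\<dots> \<longleftrightarrow> d dvd s"
    using \<open>coprime d c\<close> by (simp add: coprime_dvd_mult_right_iff)
  finally show ?thesis
    by (simp add: d_def m_def)
qed

lemma sum_seg_len_mult_mod:
  assumes "n > 0" "a \<ge> 1"
  shows "(\<Sum>s<n. seg_len r n {s, a * s mod n}) =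
    2 * \<bar>r\<bar> * real (gcd (a - 1) n) * cot (pi * real (gcd (a - 1) n) / (2 * real n))"
  using sum_abs_sin_pi_mult_div[of n "a - 1"] assms
  by (simp add: seg_len_mult_mod flip: sum_distrib_left)

lemma sum_seg_len_mult_mod_involutive:
  assumes "n > 0" "a \<ge> 1"
  defines "m \<equiv> gcd (a^2 - 1) n"
  shows "(\<Sum>s\<in>{s\<in>{..<n}. a * (a * s mod n) mod n = s}. seg_len r n {s, a * s mod n}) =
    2 * \<bar>r\<bar> * real (gcd (a - 1) m) * cot (pi * real (gcd (a - 1) m) / (2 * real m))"
proof -
  define d where "d = n div m"
  have "m > 0"
    using assms by (simp add: m_def)
  have n_eq: "n = m * d"
    by (simp add: d_def m_def)
  then have "d > 0"
    using assms by (cases d) auto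
  have "{s\<in>{..<n}. a * (a * s mod n) mod n = s} = {s\<in>{..<n}. d dvd s}"
    using mult_mod_twice_eq_iff[OF assms(2)] by (auto simp: d_def m_def)
  also have "\<dots> = (\<lambda>u. d * u) ` {..<m}"
    using \<open>d > 0\<close> by (auto simp: n_eq elim!: dvdE)
  finally have involutive_points: "{s\<in>{..<n}. a * (a * s mod n) mod n = s} = (\<lambda>u. d * u) ` {..<m}" .
  have "seg_len r n {d * u, a * (d * u) mod n} = 2 * \<bar>r\<bar> * \<bar>sin (pi * real (a - 1) * real u / real m)\<bar>" for u
  proof -
    have "pi * real (a - 1) * real (d * u) / real n = pi * real (a - 1) * real u / real m"
      using \<open>d > 0\<close> by (simp add: n_eq field_simps)
    then show ?thesis
      using assms(2) by (simp add: seg_len_mult_mod)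
  qed
  moreover have "inj_on (\<lambda>u. d * u) {..<m}"
    using \<open>d > 0\<close> by (simp add: inj_on_def)
  ultimately show ?thesis
    unfolding involutive_points using sum_abs_sin_pi_mult_div[OF \<open>m > 0\<close>, of "a - 1"]
    by (simp add: sum.reindex flip: sum_distrib_left)
qed

theorem theorem2:
  fixes n a :: nat and r :: real
  assumes "n \<ge> 1" and "a \<ge> 2" and "r > 0"
  shows "(\<Sum>e\<in>residue_edges n a. seg_len r n e) =
    2 * r * real (gcd (a - 1) n) * cot (pi * real (gcd (a - 1) n) / (2 * real n))
    - r * real (gcd (a - 1) (mdiv n a)) * cot (pi * real (gcd (a - 1) (mdiv n a)) / (2 * real (mdiv n a)))"
proof -
  have "n > 0" "a \<ge> 1"
    using assms by simp_all
  have "(\<Sum>e\<in>residue_edges n a. seg_len r n e) =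
      (\<Sum>s<n. seg_len r n {s, a * s mod n})
      - (\<Sum>s\<in>{s\<in>{..<n}. a * (a * s mod n) mod n = s}. seg_len r n {s, a * s mod n}) / 2"
    unfolding residue_edges_eq_image[OF \<open>n > 0\<close>]
    using \<open>n > 0\<close> by (intro sum_functional_graph_edges) (auto simp: seg_len_def)
  also have "\<dots> = 2 * r * real (gcd (a - 1) n) * cot (pi * real (gcd (a - 1) n) / (2 * real n))
      - r * real (gcd (a - 1) (mdiv n a)) * cot (pi * real (gcd (a - 1) (mdiv n a)) / (2 * real (mdiv n a)))"
    unfolding sum_seg_len_mult_mod[OF \<open>n > 0\<close> \<open>a \<ge> 1\<close>]
      sum_seg_len_mult_mod_involutive[OF \<open>n > 0\<close> \<open>a \<ge> 1\<close>] mdiv_eq_gcd[OF \<open>n \<ge> 1\<close> \<open>a \<ge> 1\<close>]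
    using \<open>r > 0\<close> by simp
  finally show ?thesis .
qed

end
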